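(* The sublinear perceptron takes $O( \varepsilon^{-2}\log n )$ iterations, with a total running time of $ {O}( \varepsilon^{-2}(n +d)\log n )$.
   Context: The sublinear perceptron is the following algorithm. Input: $\varepsilon>0$ and a matrix $A \in \mathbb{R}^{n \times d}$ whose rows $A_i$ all lie in the Euclidean unit ball $\mathbb{B}\subset\mathbb{R}^d$ (entries $A_{i,j}$ are assumed retrievable in constant time). Set $T \gets 200^2 \varepsilon^{-2}\log n$, $y_1 \gets 0$, $w_1 \gets \mathbf{1}_n$ (the all-ones $n$-vector), $\eta\gets \frac{1}{100} \sqrt{\frac{\log n}{T}}$. For $t=1,\dots,T$: let $p_t \gets w_t/\|w_t\|_1$ and $x_t \gets y_t/\max\{1,\|y_t\|\}$; choose $i_t\in[n]$ with probability $p_t(i)$; set $y_{t+1} \gets y_t + \frac{1}{\sqrt{2T}} A_{i_t}$; choose $j_t\in[d]$ with probability $x_t(j)^2/\|x_t\|^2$; for each $i\in[n]$ set $\tilde v_t(i) \gets A_i(j_t)\|x_t\|^2/x_t(j_t)$, $v_t(i) \gets \mathrm{clip}(\tilde v_t(i), 1/\eta)$ where $\mathrm{clip}(z,V)=\min\{V,\max\{-V,z\}\}$, and $w_{t+1}(i) \gets w_t(i)(1-\eta v_t(i)+\eta^2 v_t(i)^2)$. Return $\bar{x} = \frac{1}{T}\sum_t x_t$. *)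

theory Defs
  imports "HOL-Probability.Probability"
begin

text \<open>A randomized program with cost accounting is a probability distribution over
  pairs (result, number of unit-cost primitive operations performed). The cost model is
  a word-RAM / real-RAM: every arithmetic operation, comparison, square root, and every
  access to an entry of A costs 1; drawing an index from an explicitly given
  distribution over k items (by a linear scan of the cumulative sums) costs k.\<close>

type_synonym 'a cprog = "('a \<times> nat) pmf"

definition cret :: "'a \<Rightarrow> nat \<Rightarrow> 'a cprog" where
  "cret x c = return_pmf (x, c)"

definition cbind :: "'a cprog \<Rightarrow> ('a \<Rightarrow> 'b cprog) \<Rightarrow> 'b cprog" where
  "cbind m f = bind_pmf m (\<lambda>(x, c). map_pmf (\<lambda>(y, c'). (y, c + c')) (f x))"

text \<open>Draw an index i in {0..<k} with probability q i (q is assumed to be a probability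
  vector on {0..<k}); cost k.\<close>
definition sample_idx :: "nat \<Rightarrow> (nat \<Rightarrow> real) \<Rightarrow> nat cprog" where
  "sample_idx k q = map_pmf (\<lambda>i. (i, k)) (embed_pmf (\<lambda>i. if i < k then q i else 0))"

definition clip :: "real \<Rightarrow> real \<Rightarrow> real" where
  "clip z V = min V (max (- V) z)"

definition vnorm :: "nat \<Rightarrow> (nat \<Rightarrow> real) \<Rightarrow> real" where
  "vnorm d y = sqrt (\<Sum>j<d. (y j)\<^sup>2)"

definition perc_T :: "nat \<Rightarrow> real \<Rightarrow> nat" where
  "perc_T n \<epsilon> = nat \<lceil>200\<^sup>2 * \<epsilon> powr (-2) * ln (real n)\<rceil>"

definition perc_eta :: "nat \<Rightarrow> real \<Rightarrow> real" where
  "perc_eta n \<epsilon> = (1/100) * sqrt (ln (real n) / real (perc_T n \<epsilon>))"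

text \<open>State: (y_t, w_t, running sum of x_1..x_(t-1), number of iterations performed).\<close>
type_synonym perc_state = "(nat \<Rightarrow> real) \<times> (nat \<Rightarrow> real) \<times> (nat \<Rightarrow> real) \<times> nat"

text \<open>Costs: computing ||w_t||_1 and p_t: 2n; ||y_t||, x_t and ||x_t||^2:
  3d + 1; drawing i_t: n; updating y: d; drawing j_t: d; computing v~_t and v_t: 2n;
  updating w: n; updating the running sum of the x_t: d.
  If x_t = 0 (e.g. t = 1), the distribution for j_t is undefined; then v_t = 0 (which is
  the value of the estimator A_i(j) ||x_t||^2 / x_t(j) in the limit), at the same cost.\<close>
definition perc_step ::
  "(nat \<Rightarrow> nat \<Rightarrow> real) \<Rightarrow> nat \<Rightarrow> nat \<Rightarrow> nat \<Rightarrow> real \<Rightarrow> perc_state \<Rightarrow> perc_state cprog" where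
  "perc_step A n d T \<eta> st =
     (case st of (y, w, s, t) \<Rightarrow>
      let W = (\<Sum>i<n. w i);
          p = (\<lambda>i. w i / W);
          nx = max 1 (vnorm d y);
          x = (\<lambda>j. y j / nx);
          xn2 = (\<Sum>j<d. (x j)\<^sup>2)
      in cbind (cret () (2 * n + 3 * d + 1)) (\<lambda>_.
         cbind (sample_idx n p) (\<lambda>it.
         cbind (cret (\<lambda>j. y j + A it j / sqrt (2 * real T)) d) (\<lambda>y'.
         cbind (if xn2 = 0 then cret (\<lambda>_. 0) d
                else sample_idx d (\<lambda>j. (x j)\<^sup>2 / xn2) \<bind>
                       (\<lambda>(jt, c). return_pmf
                          ((\<lambda>i. clip (A i jt * xn2 / x jt) (1 / \<eta>)), c))) (\<lambda>v.
         cbind (cret (\<lambda>i. w i * (1 - \<eta> * v i + \<eta>\<^sup>2 * (v i)\<^sup>2)) (2 * n)) (\<lambda>w'.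
         cret (y', w', (\<lambda>j. s j + x j), Suc t) d))))))"

fun perc_iter ::
  "(nat \<Rightarrow> nat \<Rightarrow> real) \<Rightarrow> nat \<Rightarrow> nat \<Rightarrow> nat \<Rightarrow> real \<Rightarrow> nat \<Rightarrow> perc_state \<Rightarrow> perc_state cprog" where
  "perc_iter A n d T \<eta> 0 st = cret st 0"
| "perc_iter A n d T \<eta> (Suc k) st =
     cbind (perc_step A n d T \<eta> st) (perc_iter A n d T \<eta> k)"

text \<open>The whole algorithm: returns (x_bar, number of iterations performed), with its cost.
  Initialisation (y_1 = 0, w_1 = 1_n, zero running sum, T, eta): n + 2d + 2;
  final averaging: d.\<close>
definition sublinear_perceptron ::
  "(nat \<Rightarrow> nat \<Rightarrow> real) \<Rightarrow> nat \<Rightarrow> nat \<Rightarrow> real \<Rightarrow> ((nat \<Rightarrow> real) \<times> nat) cprog" where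
  "sublinear_perceptron A n d \<epsilon> =
     (let T = perc_T n \<epsilon>; \<eta> = perc_eta n \<epsilon> in
      cbind (cret ((\<lambda>_. 0), (\<lambda>_. 1), (\<lambda>_. 0), 0) (n + 2 * d + 2)) (\<lambda>st0.
      cbind (perc_iter A n d T \<eta> T st0) (\<lambda>(y, w, s, t).
      cret ((\<lambda>j. s j / real T), t) d)))"

end

theory Submission
  imports Defs
begin

text \<open>The algorithm always performs exactly T iterations, each costing 5n + 6d + 1
  operations whatever the random choices, plus n + 3d + 2 operations outside the loop.
  Since T \<le> 200^2 \<epsilon>^(-2) ln n + 1 and \<epsilon>^(-2) ln n \<ge> ln 2 \<ge> 1/2 for n \<ge> 2 and \<epsilon> \<le> 1,
  all additive constants are absorbed into a multiple of \<epsilon>^(-2) ln n.\<close>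

lemma mem_set_cret_iff: "(x, c) \<in> set_pmf (cret y k) \<longleftrightarrow> x = y \<and> c = k"
  unfolding cret_def by auto

lemma mem_set_cbind_iff:
  "(x, c) \<in> set_pmf (cbind m f) \<longleftrightarrow>
     (\<exists>a c1 c2. (a, c1) \<in> set_pmf m \<and> (x, c2) \<in> set_pmf (f a) \<and> c = c1 + c2)"
  unfolding cbind_def by (auto simp: set_bind_pmf split: prod.splits) force+

lemma sample_idx_cost: "(i, c) \<in> set_pmf (sample_idx k q) \<Longrightarrow> c = k"
  unfolding sample_idx_def by auto

lemma sample_idx_map_cost:
  "(v, c) \<in> set_pmf (sample_idx k q \<bind> (\<lambda>(j, c). return_pmf (g j, c))) \<Longrightarrow> c = k"
  by (auto simp: set_bind_pmf dest: sample_idx_cost)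

lemma perc_step_cost:
  assumes "((y', w', s', t'), c) \<in> set_pmf (perc_step A n d T \<eta> (y, w, s, t))"
  shows "c = 5 * n + 6 * d + 1 \<and> t' = Suc t"
  using assms unfolding perc_step_def Let_def
  by (auto simp: mem_set_cbind_iff mem_set_cret_iff split: if_splits
           dest!: sample_idx_cost sample_idx_map_cost)

lemma perc_iter_cost:
  "((y', w', s', t'), c) \<in> set_pmf (perc_iter A n d T \<eta> k (y, w, s, t)) \<Longrightarrow>
     c = k * (5 * n + 6 * d + 1) \<and> t' = t + k"
proof (induction k arbitrary: y w s t c)
  case 0
  then show ?case by (simp add: mem_set_cret_iff)
next
  case (Suc k)
  then obtain y1 w1 s1 t1 c1 c2
    where step: "((y1, w1, s1, t1), c1) \<in> set_pmf (perc_step A n d T \<eta> (y, w, s, t))"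
      and rest: "((y', w', s', t'), c2) \<in> set_pmf (perc_iter A n d T \<eta> k (y1, w1, s1, t1))"
      and "c = c1 + c2"
    by (auto simp: mem_set_cbind_iff)
  with perc_step_cost[OF step] Suc.IH[OF rest] show ?case by simp
qed

lemma sublinear_perceptron_outcome:
  assumes "((xbar, iters), cost) \<in> set_pmf (sublinear_perceptron A n d \<epsilon>)"
  shows "iters = perc_T n \<epsilon> \<and> cost = n + 3 * d + 2 + perc_T n \<epsilon> * (5 * n + 6 * d + 1)"
  using assms unfolding sublinear_perceptron_def Let_def
  by (auto simp: mem_set_cbind_iff mem_set_cret_iff dest!: perc_iter_cost)

lemma eps_ln_ge_half:
  assumes "2 \<le> n" "0 < \<epsilon>" "\<epsilon> \<le> 1"
  shows "1/2 \<le> \<epsilon> powr (-2) * ln (real n)"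
proof -
  have "1/2 \<le> ln (2::real)"
    using ln_le_minus_one[of "1/2::real"] by (simp add: ln_div)
  also have "\<dots> \<le> ln (real n)"
    using assms(1) by simp
  finally have "1/2 \<le> ln (real n)" .
  moreover have "1 \<le> \<epsilon> powr (-2)"
    using assms by (simp add: powr_minus one_le_inverse_iff power_le_one)
  ultimately show ?thesis
    using mult_mono[of 1 "\<epsilon> powr (-2)" "1/2" "ln (real n)"] by simp
qed

lemma perc_T_le:
  assumes "2 \<le> n" "0 < \<epsilon>" "\<epsilon> \<le> 1"
  shows "real (perc_T n \<epsilon>) \<le> 40002 * (\<epsilon> powr (-2) * ln (real n))"
proof -
  have E: "1/2 \<le> \<epsilon> powr (-2) * ln (real n)" using eps_ln_ge_half[OF assms] .
  then have "real (perc_T n \<epsilon>) \<le> 200\<^sup>2 * (\<epsilon> powr (-2) * ln (real n)) + 1"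
    unfolding perc_T_def by (simp add: mult.assoc)
  with E show ?thesis by simp
qed

lemma perceptron_cost_le:
  assumes "2 \<le> n" "1 \<le> d" "0 < \<epsilon>" "\<epsilon> \<le> 1"
  shows "real (n + 3 * d + 2 + perc_T n \<epsilon> * (5 * n + 6 * d + 1))
           \<le> 300000 * ((real n + real d) * (\<epsilon> powr (-2) * ln (real n)))"
    (is "_ \<le> _ * (?N * ?E)")
proof -
  have E: "1/2 \<le> ?E" using eps_ln_ge_half[OF assms(1,3,4)] .
  have N: "3 \<le> ?N" using assms(1,2) by simp
  have outside: "real (n + 3 * d + 2) \<le> 12 * (?N * ?E)"
  proof -
    have "real (n + 3 * d + 2) \<le> 6 * ?N" using assms(1,2) by simp
    also have "\<dots> \<le> 12 * (?N * ?E)" using mult_left_mono[OF E, of "12 * ?N"] N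
      by (simp add: algebra_simps)
    finally show ?thesis .
  qed
  have loop: "real (perc_T n \<epsilon>) * real (5 * n + 6 * d + 1) \<le> (40002 * ?E) * (7 * ?N)"
    using perc_T_le[OF assms(1,3,4)] assms(1,2) by (intro mult_mono) auto
  have "real (n + 3 * d + 2 + perc_T n \<epsilon> * (5 * n + 6 * d + 1))
        = real (n + 3 * d + 2) + real (perc_T n \<epsilon>) * real (5 * n + 6 * d + 1)"
    by (simp only: of_nat_add of_nat_mult)
  also have "\<dots> \<le> 12 * (?N * ?E) + (40002 * ?E) * (7 * ?N)"
    using outside loop by linarith
  also have "\<dots> \<le> 300000 * (?N * ?E)" using E N by (simp add: algebra_simps)
  finally show ?thesis .
qed

theorem mainTheorem1:
  "\<exists>C::real. \<forall>(n::nat) (d::nat) (\<epsilon>::real) (A::nat \<Rightarrow> nat \<Rightarrow> real).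
     2 \<le> n \<longrightarrow> 1 \<le> d \<longrightarrow> 0 < \<epsilon> \<longrightarrow> \<epsilon> \<le> 1 \<longrightarrow>
     (\<forall>i<n. (\<Sum>j<d. (A i j)\<^sup>2) \<le> 1) \<longrightarrow>
     (\<forall>xbar iters cost. ((xbar, iters), cost) \<in> set_pmf (sublinear_perceptron A n d \<epsilon>) \<longrightarrow>
        real iters \<le> C * \<epsilon> powr (-2) * ln (real n) \<and>
        real cost \<le> C * \<epsilon> powr (-2) * (real n + real d) * ln (real n))"
proof (rule exI[of _ 300000], intro allI impI conjI)
  fix n d :: nat and \<epsilon> :: real and A :: "nat \<Rightarrow> nat \<Rightarrow> real" and xbar iters cost
  assume n: "2 \<le> n" and d: "1 \<le> d" and \<epsilon>: "0 < \<epsilon>" "\<epsilon> \<le> 1"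
    and run: "((xbar, iters), cost) \<in> set_pmf (sublinear_perceptron A n d \<epsilon>)"
  note outcome = sublinear_perceptron_outcome[OF run]
  show "real iters \<le> 300000 * \<epsilon> powr (-2) * ln (real n)"
    using outcome perc_T_le[OF n \<epsilon>] eps_ln_ge_half[OF n \<epsilon>] by (simp add: mult.assoc)
  show "real cost \<le> 300000 * \<epsilon> powr (-2) * (real n + real d) * ln (real n)"
    using outcome perceptron_cost_le[OF n d \<epsilon>] by (simp add: algebra_simps)
qed

end
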